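(* (B case) Let $d\ge1$, $n\ge d$, and let $(\xi_1,\dots,\xi_n)$ be random vectors in $\mathbb{R}^d$ with $(\xi_1,\dots,\xi_n)\stackrel{d}{=}(\varepsilon_1\xi_{\sigma(1)},\dots,\varepsilon_n\xi_{\sigma(n)})$ for all permutations $\sigma$ and all $\varepsilon\in\{-1,1\}^n$, such that any $d$ vectors among $S_1,\dots,S_n$ are linearly independent a.s. Then $\ker A$ a.s. has codimension $d$ in $\mathbb{R}^n$ and a.s. is in general position w.r.t. $\mathcal{A}(B_n)$. (D case) Let $d\ge1$, $n\ge\max\{2,d\}$, and let $(\xi_1,\dots,\xi_n)$ be random vectors in $\mathbb{R}^d$ with the same distributional invariance but only for signs with $\varepsilon_1\cdots\varepsilon_n=1$, such that any $d$ vectors from either collection $S_1,\dots,S_n$ or $S_1,\dots,S_{n-1},S_n^*$ are linearly independent a.s. Then $\ker A$ a.s. has codimension $d$ in $\mathbb{R}^n$ and a.s. is in general position w.r.t. $\mathcal{A}(D_n)$.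
   Context: $S_k=\xi_1+\dots+\xi_k$, $S_n^*=S_{n-1}-\xi_n$, and $A$ is the $d\times n$ matrix with columns $\xi_1,\dots,\xi_n$, viewed as a linear map $\mathbb{R}^n\to\mathbb{R}^d$. $\mathcal{A}(B_n)$ consists of the hyperplanes $x_i=x_j$, $x_i=-x_j$ ($1\le i<j\le n$) and $x_k=0$ ($1\le k\le n$) in $\mathbb{R}^n$; $\mathcal{A}(D_n)$ of the hyperplanes $x_i=x_j$, $x_i=-x_j$ ($1\le i<j\le n$). For an arrangement $\mathcal{A}$ and $\mathcal{B}\subset\mathcal{A}$, $\mathrm{rank}(\mathcal{B})=n-\dim\bigcap_{H\in\mathcal{B}}H$. A linear subspace $M$ of $\mathbb{R}^n$ of codimension $m$ is in general position w.r.t. $\mathcal{A}$ if for every nonempty $\mathcal{B}\subset\mathcal{A}$, $\dim\bigcap_{H\in\mathcal{B}}(H\cap M)$ equals $n-m-\mathrm{rank}(\mathcal{B})$ if $\mathrm{rank}(\mathcal{B})\le n-m$ and $0$ if $\mathrm{rank}(\mathcal{B})\ge n-m$. *)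

theory Defs
  imports "HOL-Analysis.Analysis" "HOL-Probability.Probability" "HOL-Library.Function_Algebras"
begin

definition Rn :: "nat \<Rightarrow> (nat \<Rightarrow> real) set" where
  "Rn n = {x. \<forall>i. i \<notin> {1..n} \<longrightarrow> x i = 0}"

definition vdim :: "(nat \<Rightarrow> real) set \<Rightarrow> nat" where
  "vdim L = vector_space.dim (\<lambda>(c::real) (x::nat \<Rightarrow> real). (\<lambda>i. c * x i)) L"

definition is_subspace :: "(nat \<Rightarrow> real) set \<Rightarrow> bool" where
  "is_subspace L \<longleftrightarrow> 0 \<in> L \<and> (\<forall>x\<in>L. \<forall>y\<in>L. x + y \<in> L) \<and> (\<forall>c::real. \<forall>x\<in>L. (\<lambda>i. c * x i) \<in> L)"

definition arr_D :: "nat \<Rightarrow> (nat \<Rightarrow> real) set set" where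
  "arr_D n = {Rn n \<inter> {x. x i = x j} | i j. 1 \<le> i \<and> i < j \<and> j \<le> n}
           \<union> {Rn n \<inter> {x. x i = - x j} | i j. 1 \<le> i \<and> i < j \<and> j \<le> n}"

definition arr_B :: "nat \<Rightarrow> (nat \<Rightarrow> real) set set" where
  "arr_B n = arr_D n \<union> {Rn n \<inter> {x. x k = 0} | k. 1 \<le> k \<and> k \<le> n}"

definition arr_rank :: "nat \<Rightarrow> (nat \<Rightarrow> real) set set \<Rightarrow> nat" where
  "arr_rank n B = n - vdim (\<Inter>B)"

definition general_position :: "nat \<Rightarrow> (nat \<Rightarrow> real) set set \<Rightarrow> (nat \<Rightarrow> real) set \<Rightarrow> bool" where
  "general_position n Arr M \<longleftrightarrow> M \<subseteq> Rn n \<and> is_subspace M \<and>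
     (let m = n - vdim M in
      \<forall>B. B \<subseteq> Arr \<and> B \<noteq> {} \<longrightarrow>
        vdim (\<Inter>H\<in>B. H \<inter> M) =
          (if arr_rank n B \<le> n - m then n - m - arr_rank n B else 0))"

definition ker_A :: "nat \<Rightarrow> (nat \<Rightarrow> 'a \<Rightarrow> real^'d) \<Rightarrow> 'a \<Rightarrow> (nat \<Rightarrow> real) set" where
  "ker_A n \<xi> \<omega> = {x \<in> Rn n. (\<Sum>i\<in>{1..n}. x i *\<^sub>R \<xi> i \<omega>) = 0}"

definition psum :: "(nat \<Rightarrow> 'a \<Rightarrow> real^'d) \<Rightarrow> nat \<Rightarrow> 'a \<Rightarrow> real^'d" where
  "psum \<xi> k \<omega> = (\<Sum>i\<in>{1..k}. \<xi> i \<omega>)"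

definition psum_star :: "nat \<Rightarrow> (nat \<Rightarrow> 'a \<Rightarrow> real^'d) \<Rightarrow> nat \<Rightarrow> 'a \<Rightarrow> real^'d" where
  "psum_star n \<xi> k \<omega> = (if k = n then psum \<xi> (n - 1) \<omega> - \<xi> n \<omega> else psum \<xi> k \<omega>)"

definition law_invariant ::
  "'a measure \<Rightarrow> nat \<Rightarrow> (nat \<Rightarrow> 'a \<Rightarrow> real^'d) \<Rightarrow> ((nat \<Rightarrow> real) \<Rightarrow> bool) \<Rightarrow> bool" where
  "law_invariant M n \<xi> E \<longleftrightarrow>
     (\<forall>\<sigma> \<epsilon>. \<sigma> permutes {1..n} \<and> \<epsilon> \<in> {1..n} \<rightarrow> {-1, 1} \<and> E \<epsilon> \<longrightarrow>
        distr M (PiM {1..n} (\<lambda>_. borel)) (\<lambda>\<omega>. \<lambda>i\<in>{1..n}. \<xi> i \<omega>) =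
        distr M (PiM {1..n} (\<lambda>_. borel)) (\<lambda>\<omega>. \<lambda>i\<in>{1..n}. \<epsilon> i *\<^sub>R \<xi> (\<sigma> i) \<omega>))"

definition any_d_indep :: "'a measure \<Rightarrow> nat \<Rightarrow> (nat \<Rightarrow> 'a \<Rightarrow> real^'d) \<Rightarrow> bool" where
  "any_d_indep M n v \<longleftrightarrow>
     (\<forall>I. I \<subseteq> {1..n} \<and> card I = CARD('d) \<longrightarrow>
        (AE \<omega> in M. inj_on (\<lambda>k. v k \<omega>) I \<and> independent ((\<lambda>k. v k \<omega>) ` I)))"

end

theory Submission
  imports Defs
begin

text \<open>
  An intersection \<open>L\<close> of hyperplanes of \<open>\<A>(B\<^sub>n)\<close> is cut out by the relations
  \<open>x\<^sub>i = 0\<close> and \<open>x\<^sub>i = \<plusminus>x\<^sub>j\<close> valid on it, so its support splits into blocks of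
  coordinates that agree up to sign, and the signed block indicators form a basis of \<open>L\<close>.
  Listing the coordinates block after block, \<open>A\<close> maps the sum of the first \<open>k\<close> basis vectors
  to a partial sum of signed, permuted increments \<open>\<epsilon>\<^sub>i \<xi>\<^bsub>\<sigma> i\<^esub>\<close>; hence \<open>A(L)\<close> is spanned
  by \<open>dim L\<close> such partial sums. By the invariance in law these are, like \<open>S\<^sub>1, \<dots>, S\<^sub>n\<close>,
  almost surely in general position, so \<open>dim A(L) = min (dim L) d\<close> and, by rank-nullity,
  \<open>dim (L \<inter> ker A) = dim L - d\<close> almost surely. There are finitely many such \<open>L\<close>, and
  \<open>L = \<real>\<^sup>n\<close> gives the codimension.
\<close>

section \<open>Linear algebra in \<open>nat \<Rightarrow> real\<close>\<close>

instantiation "fun" :: (type, real_vector) real_vector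
begin
definition scaleR_fun :: "real \<Rightarrow> ('a \<Rightarrow> 'b) \<Rightarrow> 'a \<Rightarrow> 'b" where
  "scaleR_fun c f = (\<lambda>x. c *\<^sub>R f x)"
instance
  by standard (auto simp: scaleR_fun_def fun_eq_iff scaleR_add_right scaleR_add_left)
end

lemma scaleR_fun_apply [simp]: "(c *\<^sub>R f) x = c *\<^sub>R f x"
  by (simp add: scaleR_fun_def)

lemma sum_fun_apply: "(\<Sum>r\<in>R. f r) x = (\<Sum>r\<in>R. f r x)"
  by (induction R rule: infinite_finite_induct) auto

lemma vdim_eq_dim: "vdim L = dim L"
proof -
  have "(\<lambda>(c::real) (x::nat \<Rightarrow> real) i. c * x i) = scaleR"
    by (auto simp: fun_eq_iff)
  then show ?thesis
    unfolding vdim_def dim_raw_def by simp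
qed

lemma independent_finite_iff:
  fixes B :: "'a::real_vector set"
  assumes "finite B"
  shows "independent B \<longleftrightarrow> (\<forall>c. (\<Sum>v\<in>B. c v *\<^sub>R v) = 0 \<longrightarrow> (\<forall>v\<in>B. c v = 0))"
  using dependent_finite[OF assms] by auto

lemma independent_family_iff:
  fixes u :: "'i \<Rightarrow> 'v::real_vector"
  assumes fin: "finite I"
  shows "(\<forall>c. (\<Sum>i\<in>I. c i *\<^sub>R u i) = 0 \<longrightarrow> (\<forall>i\<in>I. c i = 0)) \<longleftrightarrow> inj_on u I \<and> independent (u ` I)"
proof
  assume H: "\<forall>c. (\<Sum>i\<in>I. c i *\<^sub>R u i) = 0 \<longrightarrow> (\<forall>i\<in>I. c i = 0)"
  have inj: "inj_on u I"
  proof (rule inj_onI, rule ccontr)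
    fix i j assume ij: "i \<in> I" "j \<in> I" "u i = u j" "i \<noteq> j"
    define c where "c = (\<lambda>k. if k = i then (1::real) else if k = j then -1 else 0)"
    have "(\<Sum>k\<in>I. c k *\<^sub>R u k) = (\<Sum>k\<in>{i,j}. c k *\<^sub>R u k)"
      by (rule sum.mono_neutral_right) (use fin ij in \<open>auto simp: c_def\<close>)
    also have "\<dots> = 0" using ij by (simp add: c_def)
    finally have "c i = 0" using H ij by blast
    then show False by (simp add: c_def)
  qed
  moreover have "\<forall>c. (\<Sum>v\<in>u ` I. c v *\<^sub>R v) = 0 \<longrightarrow> (\<forall>v\<in>u ` I. c v = 0)"
  proof (intro allI impI ballI)
    fix c v assume s: "(\<Sum>v\<in>u ` I. c v *\<^sub>R v) = 0" and v: "v \<in> u ` I"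
    have "(\<Sum>i\<in>I. c (u i) *\<^sub>R u i) = 0" using s by (simp add: sum.reindex[OF inj])
    then have "\<forall>i\<in>I. c (u i) = 0" using H[rule_format, of "\<lambda>i. c (u i)"] by blast
    then show "c v = 0" using v by blast
  qed
  ultimately show "inj_on u I \<and> independent (u ` I)"
    using independent_finite_iff[of "u ` I"] fin by blast
next
  assume H: "inj_on u I \<and> independent (u ` I)"
  show "\<forall>c. (\<Sum>i\<in>I. c i *\<^sub>R u i) = 0 \<longrightarrow> (\<forall>i\<in>I. c i = 0)"
  proof (intro allI impI ballI)
    fix c i assume s: "(\<Sum>i\<in>I. c i *\<^sub>R u i) = 0" and i: "i \<in> I"
    let ?c = "\<lambda>v. c (the_inv_into I u v)"
    have "(\<Sum>v\<in>u ` I. ?c v *\<^sub>R v) = (\<Sum>i\<in>I. ?c (u i) *\<^sub>R u i)"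
      using H by (simp add: sum.reindex)
    also have "\<dots> = (\<Sum>i\<in>I. c i *\<^sub>R u i)"
      using H by (intro sum.cong) (auto simp: the_inv_into_f_f)
    finally have "(\<Sum>v\<in>u ` I. ?c v *\<^sub>R v) = 0" using s by simp
    moreover have "\<forall>c. (\<Sum>v\<in>u ` I. c v *\<^sub>R v) = 0 \<longrightarrow> (\<forall>v\<in>u ` I. c v = 0)"
      using H independent_finite_iff[of "u ` I"] fin by blast
    ultimately have "?c (u i) = 0" using i by (metis image_eqI)
    then show "c i = 0" using H i by (simp add: the_inv_into_f_f)
  qed
qed

lemma independent_image_Diff_kernel_basis:
  fixes f :: "'a::real_vector \<Rightarrow> 'b::real_vector"
  assumes f: "linear f" and B: "finite B" "independent B" and KB: "K \<subseteq> B"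
    and ker: "\<And>x. x \<in> span B \<Longrightarrow> f x = 0 \<Longrightarrow> x \<in> span K"
  shows "inj_on f (B - K) \<and> independent (f ` (B - K))"
proof -
  have "\<forall>b\<in>B - K. c b = 0" if c: "(\<Sum>b\<in>B - K. c b *\<^sub>R f b) = 0" for c
  proof -
    define x where "x = (\<Sum>b\<in>B - K. c b *\<^sub>R b)"
    have "f x = 0"
      using c unfolding x_def by (simp add: linear_sum[OF f] linear_scale[OF f])
    moreover have "x \<in> span B"
      unfolding x_def by (intro span_sum span_scale span_base) auto
    ultimately have "x \<in> span K" by (rule ker[rotated])
    then obtain e where e: "x = (\<Sum>k\<in>K. e k *\<^sub>R k)"
      using span_finite[OF finite_subset[OF KB B(1)]] by auto
    define g where "g = (\<lambda>b. if b \<in> K then - e b else c b)"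
    have "(\<Sum>b\<in>B. g b *\<^sub>R b) = (\<Sum>b\<in>B - K. g b *\<^sub>R b) + (\<Sum>b\<in>K. g b *\<^sub>R b)"
      using sum.subset_diff[OF KB B(1)] by simp
    also have "\<dots> = x - (\<Sum>k\<in>K. e k *\<^sub>R k)"
      unfolding x_def g_def by (simp add: sum_negf)
    finally have "(\<Sum>b\<in>B. g b *\<^sub>R b) = 0" using e by simp
    then have "\<forall>b\<in>B. g b = 0" using B independent_finite_iff by blast
    then show ?thesis unfolding g_def by auto
  qed
  then show ?thesis using independent_family_iff[of "B - K" f] B(1) by auto
qed

lemma dim_eq_dim_kernel_add_dim_image:
  fixes f :: "'a::real_vector \<Rightarrow> 'b::real_vector"
  assumes f: "linear f" and S: "subspace S" and F: "finite F" "S \<subseteq> span F"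
  shows "dim S = dim {x\<in>S. f x = 0} + dim (f ` S)"
proof -
  obtain K where K: "K \<subseteq> {x\<in>S. f x = 0}" "independent K" "{x\<in>S. f x = 0} \<subseteq> span K"
    "card K = dim {x\<in>S. f x = 0}"
    using basis_exists by blast
  obtain B where B: "K \<subseteq> B" "B \<subseteq> S" "independent B" "S \<subseteq> span B"
    using maximal_independent_subset_extend[of K S] K by auto
  have finB: "finite B" using independent_span_bound[OF F(1) B(3)] B(2) F(2) by auto
  have finK: "finite K" using finB B(1) finite_subset by blast
  have SB: "span B = S" using span_subspace[OF B(2) B(4) S] .
  have dimS: "dim S = card B" using dim_span_eq_card_independent[OF B(3)] SB by simp
  have ker: "x \<in> span K" if "x \<in> span B" "f x = 0" for x
    using that SB K(3) by blast
  have indep: "inj_on f (B - K)" "independent (f ` (B - K))"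
    using independent_image_Diff_kernel_basis[OF f finB B(3) B(1) ker] by blast+
  have "f ` S = span (f ` B)" using SB f by (metis span_linear_image)
  also have "\<dots> = span (f ` (B - K))"
  proof -
    have "f b \<in> span (f ` (B - K))" if "b \<in> B" for b
    proof (cases "b \<in> K")
      case True
      then have "f b = 0" using K(1) by auto
      then show ?thesis by (simp add: span_zero)
    next
      case False
      then show ?thesis using that by (intro span_base) auto
    qed
    then have "f ` B \<subseteq> span (f ` (B - K))" by blast
    moreover have "f ` (B - K) \<subseteq> span (f ` B)" by (intro subset_trans[OF _ span_superset]) auto
    ultimately show ?thesis by (simp add: span_eq)
  qed
  finally have "dim (f ` S) = card (f ` (B - K))"
    using indep(2) by (simp add: dim_eq_card_independent)
  also have "\<dots> = card B - card K"
    using card_image[OF indep(1)] card_Diff_subset[OF finK B(1)] by simp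
  finally show ?thesis using dimS K(4) card_mono[OF finB B(1)] by simp
qed

lemma span_prefix_sums:
  fixes w :: "'a::wellorder \<Rightarrow> 'v::real_vector"
  assumes fin: "finite R"
  shows "span ((\<lambda>r. \<Sum>r'\<in>{r'\<in>R. r' \<le> r}. w r') ` R) = span (w ` R)"
proof -
  let ?P = "\<lambda>r. \<Sum>r'\<in>{r'\<in>R. r' \<le> r}. w r'"
  have "?P ` R \<subseteq> span (w ` R)"
    by (intro image_subsetI span_sum span_base) auto
  moreover have "r \<in> R \<longrightarrow> w r \<in> span (?P ` R)" for r
  proof (induction r rule: less_induct)
    case (less r)
    show ?case
    proof
      assume r: "r \<in> R"
      have "{r'\<in>R. r' \<le> r} = insert r {r'\<in>R. r' < r}" using r by auto
      then have "w r = ?P r - (\<Sum>r'\<in>{r'\<in>R. r' < r}. w r')" using fin by simp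
      moreover have "?P r \<in> span (?P ` R)" using r by (intro span_base) auto
      moreover have "(\<Sum>r'\<in>{r'\<in>R. r' < r}. w r') \<in> span (?P ` R)"
        using less by (intro span_sum) auto
      ultimately show "w r \<in> span (?P ` R)" by (simp add: span_diff)
    qed
  qed
  ultimately show ?thesis by (auto simp: span_eq)
qed

section \<open>Flats of the arrangement \<open>\<A>(B\<^sub>n)\<close>\<close>

definition coord_support :: "(nat \<Rightarrow> real) set \<Rightarrow> nat set" where
  "coord_support L = {i. \<exists>y\<in>L. y i \<noteq> 0}"

definition coord_linked :: "(nat \<Rightarrow> real) set \<Rightarrow> nat \<Rightarrow> nat \<Rightarrow> bool" where
  "coord_linked L i j \<longleftrightarrow> (\<exists>s\<in>{1,-1::real}. \<forall>y\<in>L. y i = s * y j)"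

definition block_rep :: "(nat \<Rightarrow> real) set \<Rightarrow> nat \<Rightarrow> nat" where
  "block_rep L i = (LEAST j. j \<in> coord_support L \<and> coord_linked L i j)"

definition block_sign :: "(nat \<Rightarrow> real) set \<Rightarrow> nat \<Rightarrow> real" where
  "block_sign L i = (SOME s. s \<in> {1,-1::real} \<and> (\<forall>y\<in>L. y i = s * y (block_rep L i)))"

definition block_vector :: "(nat \<Rightarrow> real) set \<Rightarrow> nat \<Rightarrow> nat \<Rightarrow> real" where
  "block_vector L r = (\<lambda>i. if i \<in> coord_support L \<and> block_rep L i = r then block_sign L i else 0)"

text \<open>An intersection of hyperplanes of \<open>\<A>(B\<^sub>n)\<close> contains every \<open>x \<in> \<real>\<^sup>n\<close> that
  satisfies all the relations \<open>x\<^sub>i = 0\<close> and \<open>x\<^sub>i = \<plusminus>x\<^sub>j\<close> valid on it; this is all that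
  is used about such intersections.\<close>

definition relation_closed :: "nat \<Rightarrow> (nat \<Rightarrow> real) set \<Rightarrow> bool" where
  "relation_closed n L \<longleftrightarrow> (\<forall>x\<in>Rn n. (\<forall>i. (\<forall>y\<in>L. y i = 0) \<longrightarrow> x i = 0) \<and>
      (\<forall>i j. \<forall>s\<in>{1,-1::real}. (\<forall>y\<in>L. y i = s * y j) \<longrightarrow> x i = s * x j) \<longrightarrow> x \<in> L)"

lemma coord_support_subset:
  assumes "L \<subseteq> Rn n" shows "coord_support L \<subseteq> {1..n}"
  using assms unfolding coord_support_def Rn_def by blast

lemma coord_linked_refl: "coord_linked L i i"
  unfolding coord_linked_def by (intro bexI[of _ 1]) auto

lemma coord_linked_sym: "coord_linked L i j \<Longrightarrow> coord_linked L j i"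
  unfolding coord_linked_def by (auto intro: bexI[of _ 1] bexI[of _ "-1"])

lemma coord_linked_trans:
  assumes "coord_linked L i j" "coord_linked L j k" shows "coord_linked L i k"
proof -
  obtain s1 where s1: "s1 \<in> {1,-1::real}" "\<forall>y\<in>L. y i = s1 * y j"
    using assms(1) unfolding coord_linked_def by blast
  obtain s2 where s2: "s2 \<in> {1,-1::real}" "\<forall>y\<in>L. y j = s2 * y k"
    using assms(2) unfolding coord_linked_def by blast
  have "s1 * s2 \<in> {1,-1}" "\<forall>y\<in>L. y i = (s1 * s2) * y k"
    using s1 s2 by (auto simp: mult.assoc)
  then show ?thesis unfolding coord_linked_def by blast
qed

lemma coord_linked_support:
  assumes "coord_linked L i j" "i \<in> coord_support L" shows "j \<in> coord_support L"
proof -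
  obtain s where s: "\<forall>y\<in>L. y i = s * y j" using assms(1) unfolding coord_linked_def by blast
  obtain y where y: "y \<in> L" "y i \<noteq> 0" using assms(2) unfolding coord_support_def by blast
  then have "y j \<noteq> 0" using s by (metis mult_zero_right)
  then show ?thesis using y(1) unfolding coord_support_def by blast
qed

lemma block_rep:
  assumes "i \<in> coord_support L"
  shows "block_rep L i \<in> coord_support L" "coord_linked L i (block_rep L i)" "block_rep L i \<le> i"
proof -
  have "i \<in> coord_support L \<and> coord_linked L i i" using assms coord_linked_refl by blast
  then show "block_rep L i \<in> coord_support L" "coord_linked L i (block_rep L i)" "block_rep L i \<le> i"
    unfolding block_rep_def by (metis (mono_tags, lifting) LeastI Least_le)+
qed

lemma block_rep_eq:
  assumes "coord_linked L i j" shows "block_rep L i = block_rep L j"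
proof -
  have "(\<lambda>k. k \<in> coord_support L \<and> coord_linked L i k) = (\<lambda>k. k \<in> coord_support L \<and> coord_linked L j k)"
    using assms by (auto intro: coord_linked_trans coord_linked_sym)
  then show ?thesis unfolding block_rep_def by simp
qed

lemma block_rep_idem: "i \<in> coord_support L \<Longrightarrow> block_rep L (block_rep L i) = block_rep L i"
  by (metis block_rep(2) block_rep_eq coord_linked_sym)

lemma block_sign:
  assumes "i \<in> coord_support L"
  shows "block_sign L i \<in> {1,-1}" "\<forall>y\<in>L. y i = block_sign L i * y (block_rep L i)"
proof -
  have "\<exists>s. s \<in> {1,-1::real} \<and> (\<forall>y\<in>L. y i = s * y (block_rep L i))"
    using block_rep(2)[OF assms] unfolding coord_linked_def by blast
  from someI_ex[OF this] show "block_sign L i \<in> {1,-1}" "\<forall>y\<in>L. y i = block_sign L i * y (block_rep L i)"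
    unfolding block_sign_def by blast+
qed

locale B_flat =
  fixes n :: nat and L :: "(nat \<Rightarrow> real) set"
  assumes flat_subset_Rn: "L \<subseteq> Rn n" and subspace_flat: "subspace L"
    and flat_relation_closed: "relation_closed n L"
begin

abbreviation "supp \<equiv> coord_support L"
abbreviation "rep \<equiv> block_rep L"
abbreviation "reps \<equiv> rep ` supp"
abbreviation "sg \<equiv> block_sign L"
abbreviation "bv \<equiv> block_vector L"

lemma supp_subset: "supp \<subseteq> {1..n}"
  using coord_support_subset[OF flat_subset_Rn] .

lemma finite_supp: "finite supp"
  using supp_subset finite_subset by blast

lemma finite_reps: "finite reps"
  using finite_supp by blast

lemma reps_subset_supp: "r \<in> reps \<Longrightarrow> r \<in> supp"
  using block_rep(1) by blast

lemma rep_reps: "r \<in> reps \<Longrightarrow> rep r = r"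
  using block_rep_idem by blast

lemma block_vector_linked:
  assumes r: "r \<in> reps" and s: "s \<in> {1,-1}" and H: "\<forall>y\<in>L. y i = s * y j"
  shows "bv r i = s * bv r j"
proof (cases "i \<in> supp")
  case True
  have "coord_linked L i j" using s H unfolding coord_linked_def by blast
  then have j: "j \<in> supp" and eq: "rep i = rep j"
    using True coord_linked_support block_rep_eq by blast+
  show ?thesis
  proof (cases "rep i = r")
    case rep_i: True
    obtain y0 where y0: "y0 \<in> L" "y0 r \<noteq> 0"
      using reps_subset_supp[OF r] unfolding coord_support_def by blast
    have "sg i * y0 r = y0 i"
      using block_sign(2)[OF True, rule_format, OF y0(1)] rep_i by simp
    also have "\<dots> = s * y0 j" using H y0(1) by blast
    also have "y0 j = sg j * y0 r"
      using block_sign(2)[OF j, rule_format, OF y0(1)] rep_i eq by simp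
    finally have "sg i = s * sg j" using y0(2) by simp
    then show ?thesis using rep_i eq True j unfolding block_vector_def by simp
  next
    case False
    then show ?thesis using eq True j unfolding block_vector_def by simp
  qed
next
  case False
  have "y j = 0" if "y \<in> L" for y
  proof -
    have "y i = 0" using False that unfolding coord_support_def by blast
    moreover have "y i = s * y j" using H that by blast
    ultimately show ?thesis using s by auto
  qed
  then have "j \<notin> supp" unfolding coord_support_def by blast
  then show ?thesis using False unfolding block_vector_def by simp
qed

lemma block_vector_in_flat:
  assumes r: "r \<in> reps" shows "bv r \<in> L"
proof -
  have "bv r \<in> Rn n"
    using supp_subset unfolding Rn_def block_vector_def by auto
  moreover have "\<forall>i. (\<forall>y\<in>L. y i = 0) \<longrightarrow> bv r i = 0"
    unfolding block_vector_def coord_support_def by auto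
  ultimately show ?thesis
    using block_vector_linked[OF r] flat_relation_closed unfolding relation_closed_def by blast
qed

lemma block_vector_at_rep:
  assumes "r \<in> reps" shows "bv r' r = (if r' = r then sg r else 0)"
  using reps_subset_supp[OF assms] rep_reps[OF assms] unfolding block_vector_def by auto

lemma block_vector_expansion:
  assumes x: "x \<in> L" shows "x = (\<Sum>r\<in>reps. x r *\<^sub>R bv r)"
proof
  fix i
  have "(\<Sum>r\<in>reps. x r *\<^sub>R bv r) i = (\<Sum>r\<in>reps. x r * bv r i)"
    by (simp add: sum_fun_apply)
  also have "\<dots> = x i"
  proof (cases "i \<in> supp")
    case True
    have "(\<Sum>r\<in>reps. x r * bv r i) = (\<Sum>r\<in>{rep i}. x r * bv r i)"
      by (rule sum.mono_neutral_right) (use finite_reps True in \<open>auto simp: block_vector_def\<close>)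
    also have "\<dots> = x (rep i) * sg i" using True by (simp add: block_vector_def)
    also have "\<dots> = x i" using block_sign(2)[OF True] x by (metis mult.commute)
    finally show ?thesis .
  next
    case False
    then show ?thesis using x unfolding coord_support_def block_vector_def by auto
  qed
  finally show "x i = (\<Sum>r\<in>reps. x r *\<^sub>R bv r) i" by simp
qed

lemma independent_block_vectors: "inj_on bv reps \<and> independent (bv ` reps)"
proof -
  have "c r = 0" if s: "(\<Sum>r\<in>reps. c r *\<^sub>R bv r) = 0" and r: "r \<in> reps" for c r
  proof -
    have "0 = (\<Sum>r'\<in>reps. c r' *\<^sub>R bv r') r" using s by simp
    also have "\<dots> = (\<Sum>r'\<in>reps. c r' * bv r' r)" by (simp add: sum_fun_apply)
    also have "\<dots> = (\<Sum>r'\<in>{r}. c r' * bv r' r)"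
      by (rule sum.mono_neutral_right) (use finite_reps r block_vector_at_rep[OF r] in auto)
    also have "\<dots> = c r * sg r" using block_vector_at_rep[OF r] by simp
    finally show "c r = 0" using block_sign(1)[OF reps_subset_supp[OF r]] by auto
  qed
  then show ?thesis using independent_family_iff[OF finite_reps, of bv] by blast
qed

lemma span_block_vectors: "span (bv ` reps) = L"
proof (rule span_subspace)
  show "bv ` reps \<subseteq> L" using block_vector_in_flat by blast
  show "L \<subseteq> span (bv ` reps)"
  proof
    fix x assume x: "x \<in> L"
    have "(\<Sum>r\<in>reps. x r *\<^sub>R bv r) \<in> span (bv ` reps)"
      by (intro span_sum span_scale span_base) auto
    then show "x \<in> span (bv ` reps)" using block_vector_expansion[OF x] by simp
  qed
qed (rule subspace_flat)

lemma dim_flat: "dim L = card reps"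
  using span_block_vectors independent_block_vectors
  by (metis card_image dim_eq_card dim_span)

lemma dim_flat_le: "dim L \<le> n"
proof -
  have "reps \<subseteq> {1..n}" using reps_subset_supp supp_subset by blast
  then show ?thesis unfolding dim_flat using card_mono[of "{1..n}" reps] by simp
qed

end

definition B_hyperplane :: "nat \<Rightarrow> (nat \<Rightarrow> real) set \<Rightarrow> bool" where
  "B_hyperplane n H \<longleftrightarrow> (\<exists>i j. H = Rn n \<inter> {x. x i = x j}) \<or> (\<exists>i j. H = Rn n \<inter> {x. x i = - x j})
     \<or> (\<exists>k. H = Rn n \<inter> {x. x k = 0})"

lemma arr_D_subset_arr_B: "arr_D n \<subseteq> arr_B n"
  unfolding arr_B_def by blast

lemma B_hyperplane_if_in_arr_B: "H \<in> arr_B n \<Longrightarrow> B_hyperplane n H"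
  unfolding arr_B_def arr_D_def B_hyperplane_def by blast

lemma finite_arr_B: "finite (arr_B n)"
proof -
  have "arr_B n \<subseteq> (\<lambda>(i,j). Rn n \<inter> {x. x i = x j}) ` ({1..n} \<times> {1..n})
      \<union> (\<lambda>(i,j). Rn n \<inter> {x. x i = - x j}) ` ({1..n} \<times> {1..n})
      \<union> (\<lambda>k. Rn n \<inter> {x. x k = 0}) ` {1..n}"
    unfolding arr_B_def arr_D_def by force
  then show ?thesis by (rule finite_subset) auto
qed

lemma subspace_Rn: "subspace (Rn n)"
  by (rule subspaceI) (auto simp: Rn_def)

lemma subspace_B_hyperplane:
  assumes "B_hyperplane n H" shows "subspace H"
  using assms unfolding B_hyperplane_def
  by (elim disjE exE) (simp_all, (rule subspaceI; auto simp: Rn_def)+)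

lemma B_flat_Inter_hyperplanes:
  assumes ne: "B \<noteq> {}" and hyp: "\<And>H. H \<in> B \<Longrightarrow> B_hyperplane n H"
  shows "B_flat n (\<Inter>B)"
proof
  show "\<Inter>B \<subseteq> Rn n" using ne hyp unfolding B_hyperplane_def by blast
  show "subspace (\<Inter>B)" using hyp subspace_B_hyperplane by (intro subspace_Inter) blast
  show "relation_closed n (\<Inter>B)"
    unfolding relation_closed_def
  proof (intro ballI impI)
    fix x assume x: "x \<in> Rn n" and rel: "(\<forall>i. (\<forall>y\<in>\<Inter>B. y i = 0) \<longrightarrow> x i = 0) \<and>
      (\<forall>i j. \<forall>s\<in>{1,-1::real}. (\<forall>y\<in>\<Inter>B. y i = s * y j) \<longrightarrow> x i = s * x j)"
    show "x \<in> \<Inter>B"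
    proof
      fix H assume H: "H \<in> B"
      then have sub: "\<Inter>B \<subseteq> H" by blast
      from hyp[OF H] show "x \<in> H" unfolding B_hyperplane_def
      proof (elim disjE exE)
        fix i j assume HH: "H = Rn n \<inter> {x. x i = x j}"
        then have "\<forall>y\<in>\<Inter>B. y i = 1 * y j" using sub by auto
        then show "x \<in> H" using rel HH x by auto
      next
        fix i j assume HH: "H = Rn n \<inter> {x. x i = - x j}"
        then have "\<forall>y\<in>\<Inter>B. y i = -1 * y j" using sub by auto
        then show "x \<in> H" using rel HH x by auto
      next
        fix k assume HH: "H = Rn n \<inter> {x. x k = 0}"
        then have "\<forall>y\<in>\<Inter>B. y k = 0" using sub by auto
        then show "x \<in> H" using rel HH x by auto
      qed
    qed
  qed
qed

lemma B_flat_Rn: "B_flat n (Rn n)"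
  by standard (auto simp: subspace_Rn relation_closed_def)

lemma dim_Rn: "dim (Rn n) = n"
proof -
  define e where "e i = (\<lambda>j::nat. if j = i then 1 else 0 :: real)" for i :: nat
  have e_comb: "(\<Sum>i\<in>{1..n}. c i *\<^sub>R e i) j = (if j \<in> {1..n} then c j else 0)" for c j
    by (simp add: sum_fun_apply e_def if_distrib[of "\<lambda>t. _ * t"] cong: if_cong)
  have "\<forall>c. (\<Sum>i\<in>{1..n}. c i *\<^sub>R e i) = 0 \<longrightarrow> (\<forall>i\<in>{1..n}. c i = 0)"
  proof (intro allI impI ballI)
    fix c i assume "(\<Sum>i\<in>{1..n}. c i *\<^sub>R e i) = 0" "i \<in> {1..n}"
    then show "c i = 0" using e_comb[of c i] by simp
  qed
  then have indep: "inj_on e {1..n}" "independent (e ` {1..n})"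
    using independent_family_iff[of "{1..n}" e] by auto
  have "span (e ` {1..n}) = Rn n"
  proof (rule span_subspace)
    show "e ` {1..n} \<subseteq> Rn n" unfolding e_def Rn_def by auto
    show "Rn n \<subseteq> span (e ` {1..n})"
    proof
      fix x assume "x \<in> Rn n"
      then have "x = (\<Sum>i\<in>{1..n}. x i *\<^sub>R e i)" unfolding fun_eq_iff e_comb Rn_def by auto
      moreover have "(\<Sum>i\<in>{1..n}. x i *\<^sub>R e i) \<in> span (e ` {1..n})"
        by (intro span_sum span_scale span_base) auto
      ultimately show "x \<in> span (e ` {1..n})" by simp
    qed
  qed (rule subspace_Rn)
  then have "dim (Rn n) = card (e ` {1..n})"
    using dim_span_eq_card_independent[OF indep(2)] by simp
  also have "\<dots> = n" using card_image[OF indep(1)] by simp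
  finally show ?thesis .
qed

section \<open>The image of a flat under \<open>A\<close>\<close>

definition rank_by :: "('a \<Rightarrow> 'b::linorder) \<Rightarrow> 'a set \<Rightarrow> 'a \<Rightarrow> nat" where
  "rank_by key S i = Suc (card {j\<in>S. key j < key i})"

lemma rank_by_less:
  assumes "finite S" "i \<in> S" "j \<in> S" "key i < key j"
  shows "rank_by key S i < rank_by key S j"
proof -
  have "{j'\<in>S. key j' < key i} \<subset> {j'\<in>S. key j' < key j}"
    using assms by auto
  then show ?thesis unfolding rank_by_def using assms(1) by (simp add: psubset_card_mono)
qed

lemma inj_on_rank_by:
  assumes "finite S" "inj_on key S"
  shows "inj_on (rank_by key S) S"
proof (rule inj_onI, rule ccontr)
  fix i j assume ij: "i \<in> S" "j \<in> S" "rank_by key S i = rank_by key S j" "i \<noteq> j"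
  then have "key i \<noteq> key j" using assms(2) by (auto dest: inj_onD)
  then have "key i < key j \<or> key j < key i" by auto
  then show False
    using rank_by_less[OF assms(1), of i j key] rank_by_less[OF assms(1), of j i key] ij by auto
qed

lemma rank_by_image_downward_closed:
  assumes fin: "finite S" and inj: "inj_on key S" and DS: "D \<subseteq> S"
    and down: "\<And>u j. u \<in> D \<Longrightarrow> j \<in> S \<Longrightarrow> key j < key u \<Longrightarrow> j \<in> D"
  shows "rank_by key S ` D = {1..card D}"
proof -
  have finD: "finite D" using fin DS finite_subset by blast
  have "rank_by key S u \<in> {1..card D}" if u: "u \<in> D" for u
  proof -
    have "{j\<in>S. key j < key u} \<subseteq> D - {u}" using down u by auto
    then have "card {j\<in>S. key j < key u} \<le> card (D - {u})" using finD by (simp add: card_mono)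
    moreover have "card (D - {u}) < card D" using card_Diff1_less[OF finD u] .
    ultimately show ?thesis unfolding rank_by_def by simp
  qed
  then have sub: "rank_by key S ` D \<subseteq> {1..card D}" by blast
  moreover have "card (rank_by key S ` D) = card D"
    using inj_on_rank_by[OF fin inj] DS by (meson card_image inj_on_subset)
  ultimately show ?thesis using card_subset_eq[OF finite_atLeastAtMost sub] by simp
qed

definition partial_sum :: "(nat \<Rightarrow> 'v::comm_monoid_add) \<Rightarrow> nat \<Rightarrow> 'v" where
  "partial_sum x t = (\<Sum>i\<in>{1..t}. x i)"

definition partial_sum_star :: "nat \<Rightarrow> (nat \<Rightarrow> 'v::ab_group_add) \<Rightarrow> nat \<Rightarrow> 'v" where
  "partial_sum_star n x t = (if t = n then partial_sum x (n - 1) - x n else partial_sum x t)"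

definition A_map :: "nat \<Rightarrow> (nat \<Rightarrow> 'v::real_vector) \<Rightarrow> (nat \<Rightarrow> real) \<Rightarrow> 'v" where
  "A_map n z x = (\<Sum>i\<in>{1..n}. x i *\<^sub>R z i)"

lemma linear_A_map: "linear (A_map n z)"
  by (rule linearI) (simp_all add: A_map_def scaleR_add_left sum.distrib scaleR_sum_right)

lemma partial_sum_star_flip_last:
  assumes "1 \<le> n" "t \<le> n" and y: "\<And>p. p \<in> {1..n} \<Longrightarrow> y p = (if p = n then - x p else x p)"
  shows "partial_sum_star n y t = partial_sum x t"
proof -
  have "partial_sum y s = partial_sum x s" if "s < n" for s
    unfolding partial_sum_def using that y by (intro sum.cong) auto
  moreover have "partial_sum x n = partial_sum x (n - 1) + x n"
    using assms(1) by (cases n) (auto simp: partial_sum_def)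
  ultimately show ?thesis
    using assms unfolding partial_sum_star_def by auto
qed

lemma prod_negate_factor:
  fixes f :: "'i \<Rightarrow> 'a::comm_ring_1"
  assumes "finite S" "k \<in> S"
  shows "(\<Prod>i\<in>S. if i = k then - f i else f i) = - (\<Prod>i\<in>S. f i)"
proof -
  have "(\<Prod>i\<in>S - {k}. if i = k then - f i else f i) = (\<Prod>i\<in>S - {k}. f i)"
    by (rule prod.cong) auto
  then show ?thesis using assms by (simp add: prod.remove[of S k])
qed

lemma prod_sign_values:
  "finite S \<Longrightarrow> (\<And>i. i \<in> S \<Longrightarrow> f i \<in> {1,-1::real}) \<Longrightarrow> (\<Prod>i\<in>S. f i) \<in> {1,-1}"
proof (induction S rule: finite_induct)
  case (insert x F)
  then have "f x \<in> {1,-1}" "prod f F \<in> {1,-1}" by auto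
  then show ?case using insert(1,2) by auto
qed simp

lemma prod_flip_sign_eq_1:
  fixes f :: "'i \<Rightarrow> real"
  assumes S: "finite S" "k \<in> S" and f: "\<And>i. i \<in> S \<Longrightarrow> f i \<in> {1,-1}"
  shows "(\<Prod>i\<in>S. if (\<Prod>j\<in>S. f j) \<noteq> 1 \<and> i = k then - f i else f i) = 1"
proof (cases "(\<Prod>j\<in>S. f j) = 1")
  case False
  moreover have "(\<Prod>j\<in>S. f j) \<in> {1,-1}" using prod_sign_values[of S f] S(1) f by blast
  ultimately have "(\<Prod>j\<in>S. f j) = -1" by simp
  then show ?thesis using False prod_negate_factor[OF S, of f] by simp
qed simp

context B_flat
begin

text \<open>\<open>block_key\<close> encodes the lexicographic order on (block representative, index), with the
  coordinates outside the support last.\<close>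

definition block_key :: "nat \<Rightarrow> nat" where
  "block_key i = (if i \<in> supp then rep i else Suc n) * Suc n + i"

definition block_pos :: "nat \<Rightarrow> nat" where
  "block_pos i = (if i \<in> {1..n} then rank_by block_key {1..n} i else i)"

definition blocks_upto :: "nat \<Rightarrow> nat set" where
  "blocks_upto r = {i\<in>supp. rep i \<le> r}"

definition sign_ext :: "nat \<Rightarrow> real" where
  "sign_ext i = (if i \<in> supp then sg i else 1)"

lemma block_key_mod: "i \<le> n \<Longrightarrow> block_key i mod Suc n = i"
  unfolding block_key_def by (metis le_imp_less_Suc mod_less mod_mult_self3)

lemma inj_on_block_key: "inj_on block_key {1..n}"
  by (rule inj_onI) (metis atLeastAtMost_iff block_key_mod)

lemma block_pos_eq: "i \<in> {1..n} \<Longrightarrow> block_pos i = rank_by block_key {1..n} i"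
  unfolding block_pos_def by simp

lemma block_pos_image:
  assumes "D \<subseteq> {1..n}" "\<And>u j. u \<in> D \<Longrightarrow> j \<in> {1..n} \<Longrightarrow> block_key j < block_key u \<Longrightarrow> j \<in> D"
  shows "block_pos ` D = {1..card D}"
proof -
  have "block_pos ` D = rank_by block_key {1..n} ` D"
    using assms(1) block_pos_eq by (intro image_cong[OF refl]) blast
  also have "\<dots> = {1..card D}"
    using rank_by_image_downward_closed[OF _ inj_on_block_key assms] by simp
  finally show ?thesis .
qed

lemma block_pos_permutes: "block_pos permutes {1..n}"
proof (rule bij_imp_permutes)
  have "inj_on block_pos {1..n}"
    using inj_on_rank_by[OF _ inj_on_block_key] block_pos_eq inj_on_cong by blast
  moreover have "block_pos ` {1..n} = {1..n}"
    using block_pos_image[of "{1..n}"] by simp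
  ultimately show "bij_betw block_pos {1..n} {1..n}" unfolding bij_betw_def by simp
  show "block_pos i = i" if "i \<notin> {1..n}" for i
    using that unfolding block_pos_def by auto
qed

lemma blocks_upto_subset: "blocks_upto r \<subseteq> {1..n}"
  using supp_subset unfolding blocks_upto_def by auto

lemma finite_blocks_upto: "finite (blocks_upto r)"
  using finite_supp unfolding blocks_upto_def by auto

lemma block_key_supp: "i \<in> supp \<Longrightarrow> block_key i = rep i * Suc n + i"
  unfolding block_key_def by simp

lemma block_key_supp_less:
  assumes "i \<in> supp" shows "block_key i < Suc n * Suc n"
proof -
  have "i \<le> n" using assms supp_subset by auto
  moreover have "rep i * Suc n \<le> n * Suc n"
    using block_rep(3)[OF assms] \<open>i \<le> n\<close> by (intro mult_le_mono1) simp
  moreover have "Suc n * Suc n = n * Suc n + Suc n" by simp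
  ultimately show ?thesis using block_key_supp[OF assms] by linarith
qed

lemma blocks_upto_downward_closed:
  assumes u: "u \<in> blocks_upto r" and j: "j \<in> {1..n}" and less: "block_key j < block_key u"
  shows "j \<in> blocks_upto r"
proof -
  have u_supp: "u \<in> supp" and "rep u \<le> r" using u unfolding blocks_upto_def by auto
  have "u \<le> n" using u_supp supp_subset by auto
  have j_supp: "j \<in> supp"
  proof (rule ccontr)
    assume "j \<notin> supp"
    then have "Suc n * Suc n \<le> block_key j" unfolding block_key_def by simp
    then show False using less block_key_supp_less[OF u_supp] by linarith
  qed
  have "rep j \<le> rep u"
  proof (rule ccontr)
    assume "\<not> rep j \<le> rep u"
    then have "Suc (rep u) * Suc n \<le> rep j * Suc n" by (intro mult_le_mono1) simp
    moreover have "Suc (rep u) * Suc n = rep u * Suc n + Suc n" by simp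
    ultimately show False
      using less block_key_supp[OF u_supp] block_key_supp[OF j_supp] \<open>u \<le> n\<close> by linarith
  qed
  then show ?thesis using j_supp \<open>rep u \<le> r\<close> unfolding blocks_upto_def by simp
qed

lemma partial_sum_block_order:
  fixes z :: "nat \<Rightarrow> 'v::real_vector"
  defines "\<pi> \<equiv> inv block_pos"
  shows "partial_sum (\<lambda>p. sign_ext (\<pi> p) *\<^sub>R z (\<pi> p)) (card (blocks_upto r))
           = (\<Sum>i\<in>blocks_upto r. sign_ext i *\<^sub>R z i)"
proof -
  have inj: "inj_on block_pos (blocks_upto r)"
    using permutes_inj[OF block_pos_permutes] by (rule inj_on_subset) simp
  have img: "block_pos ` blocks_upto r = {1..card (blocks_upto r)}"
    by (rule block_pos_image[OF blocks_upto_subset blocks_upto_downward_closed])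
  have "partial_sum (\<lambda>p. sign_ext (\<pi> p) *\<^sub>R z (\<pi> p)) (card (blocks_upto r))
      = (\<Sum>p\<in>block_pos ` blocks_upto r. sign_ext (\<pi> p) *\<^sub>R z (\<pi> p))"
    unfolding partial_sum_def img ..
  also have "\<dots> = (\<Sum>i\<in>blocks_upto r. sign_ext (\<pi> (block_pos i)) *\<^sub>R z (\<pi> (block_pos i)))"
    unfolding sum.reindex[OF inj] comp_def ..
  also have "\<dots> = (\<Sum>i\<in>blocks_upto r. sign_ext i *\<^sub>R z i)"
    unfolding \<pi>_def permutes_inverses(2)[OF block_pos_permutes] ..
  finally show ?thesis .
qed

lemma A_map_block_vector:
  "A_map n z (bv r) = (\<Sum>i\<in>{i\<in>supp. rep i = r}. sign_ext i *\<^sub>R z i)"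
proof -
  have "A_map n z (bv r) = (\<Sum>i\<in>{1..n}. if i \<in> supp \<and> rep i = r then sign_ext i *\<^sub>R z i else 0)"
    unfolding A_map_def block_vector_def sign_ext_def by (intro sum.cong) auto
  also have "\<dots> = (\<Sum>i\<in>{i\<in>{1..n}. i \<in> supp \<and> rep i = r}. sign_ext i *\<^sub>R z i)"
    by (rule sum.inter_filter[symmetric]) simp
  also have "{i\<in>{1..n}. i \<in> supp \<and> rep i = r} = {i\<in>supp. rep i = r}"
    using supp_subset by auto
  finally show ?thesis .
qed

lemma sum_blocks_upto:
  "(\<Sum>i\<in>blocks_upto r. sign_ext i *\<^sub>R z i) = (\<Sum>r'\<in>{r'\<in>reps. r' \<le> r}. A_map n z (bv r'))"
proof -
  have "(\<Sum>i\<in>blocks_upto r. sign_ext i *\<^sub>R z i)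
      = (\<Sum>r'\<in>{r'\<in>reps. r' \<le> r}. \<Sum>i\<in>{i. i \<in> blocks_upto r \<and> rep i = r'}. sign_ext i *\<^sub>R z i)"
    by (rule sum.group[symmetric]) (use finite_blocks_upto finite_reps in \<open>auto simp: blocks_upto_def\<close>)
  also have "\<dots> = (\<Sum>r'\<in>{r'\<in>reps. r' \<le> r}. A_map n z (bv r'))"
    unfolding A_map_block_vector blocks_upto_def by (intro sum.cong) auto
  finally show ?thesis .
qed

lemma rep_in_blocks_upto:
  assumes "r \<in> reps" shows "r \<in> blocks_upto r"
  using reps_subset_supp[OF assms] rep_reps[OF assms] unfolding blocks_upto_def by simp

lemma card_blocks_upto_less:
  assumes r1: "r1 \<in> reps" and r2: "r2 \<in> reps" and less: "r1 < r2"
  shows "card (blocks_upto r1) < card (blocks_upto r2)"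
proof (rule psubset_card_mono[OF finite_blocks_upto])
  have "blocks_upto r1 \<subseteq> blocks_upto r2"
    using less unfolding blocks_upto_def by auto
  moreover have "r2 \<notin> blocks_upto r1"
    using less rep_reps[OF r2] unfolding blocks_upto_def by simp
  ultimately show "blocks_upto r1 \<subset> blocks_upto r2"
    using rep_in_blocks_upto[OF r2] by blast
qed

lemma inj_on_card_blocks_upto: "inj_on (\<lambda>r. card (blocks_upto r)) reps"
proof (rule inj_onI, rule ccontr)
  fix r1 r2 assume r: "r1 \<in> reps" "r2 \<in> reps" "card (blocks_upto r1) = card (blocks_upto r2)"
    and "r1 \<noteq> r2"
  then consider "r1 < r2" | "r2 < r1" by linarith
  then show False
    using card_blocks_upto_less[OF r(1,2)] card_blocks_upto_less[OF r(2,1)] r(3) by cases simp_all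
qed

lemma card_blocks_upto_range:
  assumes "r \<in> reps" shows "card (blocks_upto r) \<in> {1..n}"
proof -
  have "0 < card (blocks_upto r)"
    using rep_in_blocks_upto[OF assms] finite_blocks_upto card_gt_0_iff by blast
  moreover have "card (blocks_upto r) \<le> n" using card_mono[OF _ blocks_upto_subset] by simp
  ultimately show ?thesis by simp
qed

lemma span_A_map_block_vectors:
  fixes z :: "nat \<Rightarrow> 'v::real_vector"
  defines "\<pi> \<equiv> inv block_pos"
  shows "span (A_map n z ` bv ` reps) =
         span (partial_sum (\<lambda>p. sign_ext (\<pi> p) *\<^sub>R z (\<pi> p)) ` (\<lambda>r. card (blocks_upto r)) ` reps)"
proof -
  have eq: "partial_sum (\<lambda>p. sign_ext (\<pi> p) *\<^sub>R z (\<pi> p)) (card (blocks_upto r))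
            = (\<Sum>r'\<in>{r'\<in>reps. r' \<le> r}. A_map n z (bv r'))" for r
    unfolding \<pi>_def by (simp only: partial_sum_block_order sum_blocks_upto)
  have "span (A_map n z ` bv ` reps) = span ((\<lambda>r. \<Sum>r'\<in>{r'\<in>reps. r' \<le> r}. A_map n z (bv r')) ` reps)"
    using span_prefix_sums[OF finite_reps, of "\<lambda>r. A_map n z (bv r)"] by (simp only: image_image)
  also have "(\<lambda>r. \<Sum>r'\<in>{r'\<in>reps. r' \<le> r}. A_map n z (bv r')) ` reps
      = partial_sum (\<lambda>p. sign_ext (\<pi> p) *\<^sub>R z (\<pi> p)) ` (\<lambda>r. card (blocks_upto r)) ` reps"
    by (simp only: image_image eq)
  finally show ?thesis .
qed

lemma sign_ext_values: "sign_ext i \<in> {1,-1}"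
  unfolding sign_ext_def using block_sign(1) by auto

text \<open>In the D case only sign vectors with product \<open>1\<close> preserve the law. If the block signs
  have product \<open>-1\<close>, the sign of the last increment is flipped as well, and then
  \<open>S\<^sub>1, \<dots>, S\<^sub>n\<^sub>-\<^sub>1, S\<^sub>n\<^sup>*\<close> of the flipped sequence are the partial sums of the unflipped one.\<close>

lemma flat_image_spanned_by_partial_sums:
  fixes even_signs :: bool
  assumes n: "1 \<le> n"
  obtains V T \<pi> \<epsilon> star where "finite V" "span V = L" "card T = dim L" "T \<subseteq> {1..n}"
    "\<pi> permutes {1..n}" "\<epsilon> \<in> {1..n} \<rightarrow> {-1,1}"
    "star \<Longrightarrow> even_signs" "even_signs \<Longrightarrow> (\<Prod>i\<in>{1..n}. \<epsilon> i) = 1"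
    "\<And>z::nat \<Rightarrow> 'v::real_vector. span (A_map n z ` V) =
        span ((if star then partial_sum_star n else partial_sum) (\<lambda>p. \<epsilon> p *\<^sub>R z (\<pi> p)) ` T)"
proof -
  define \<pi> where "\<pi> = inv block_pos"
  define T where "T = (\<lambda>r. card (blocks_upto r)) ` reps"
  define star where "star \<longleftrightarrow> even_signs \<and> (\<Prod>i\<in>{1..n}. sign_ext (\<pi> i)) \<noteq> 1"
  define \<epsilon> where "\<epsilon> p = (if star \<and> p = n then - sign_ext (\<pi> p) else sign_ext (\<pi> p))" for p
  have \<pi>: "\<pi> permutes {1..n}"
    unfolding \<pi>_def by (rule permutes_inv[OF block_pos_permutes])
  have card_T: "card T = dim L"
    unfolding T_def dim_flat using card_image[OF inj_on_card_blocks_upto] .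
  have T: "T \<subseteq> {1..n}"
    unfolding T_def using card_blocks_upto_range by blast
  have "\<epsilon> p \<in> {-1,1}" for p
    using sign_ext_values[of "\<pi> p"] by (auto simp: \<epsilon>_def)
  then have \<epsilon>: "\<epsilon> \<in> {1..n} \<rightarrow> {-1,1}" by blast
  have star: "star \<Longrightarrow> even_signs" unfolding star_def by simp
  have prod_\<epsilon>: "(\<Prod>i\<in>{1..n}. \<epsilon> i) = 1" if even_signs
    using prod_flip_sign_eq_1[of "{1..n}" n "\<lambda>i. sign_ext (\<pi> i)"] n sign_ext_values that
    unfolding \<epsilon>_def star_def by simp
  have "span (A_map n z ` bv ` reps) =
      span ((if star then partial_sum_star n else partial_sum) (\<lambda>p. \<epsilon> p *\<^sub>R z (\<pi> p)) ` T)"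
    for z :: "nat \<Rightarrow> 'v::real_vector"
  proof -
    have "(if star then partial_sum_star n else partial_sum) (\<lambda>p. \<epsilon> p *\<^sub>R z (\<pi> p)) t
        = partial_sum (\<lambda>p. sign_ext (\<pi> p) *\<^sub>R z (\<pi> p)) t" if "t \<in> T" for t
    proof (cases star)
      case True
      have "partial_sum_star n (\<lambda>p. \<epsilon> p *\<^sub>R z (\<pi> p)) t = partial_sum (\<lambda>p. sign_ext (\<pi> p) *\<^sub>R z (\<pi> p)) t"
        using that T by (intro partial_sum_star_flip_last[OF n]) (auto simp: \<epsilon>_def True)
      then show ?thesis using True by simp
    next
      case False
      then show ?thesis by (simp add: \<epsilon>_def)
    qed
    then have "(if star then partial_sum_star n else partial_sum) (\<lambda>p. \<epsilon> p *\<^sub>R z (\<pi> p)) ` T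
        = partial_sum (\<lambda>p. sign_ext (\<pi> p) *\<^sub>R z (\<pi> p)) ` T"
      by (rule image_cong[OF refl])
    also have "\<dots> = partial_sum (\<lambda>p. sign_ext (inv block_pos p) *\<^sub>R z (inv block_pos p))
        ` (\<lambda>r. card (blocks_upto r)) ` reps"
      unfolding T_def \<pi>_def ..
    finally show ?thesis unfolding span_A_map_block_vectors by simp
  qed
  with finite_reps span_block_vectors card_T T \<pi> \<epsilon> star prod_\<epsilon> show thesis
    by (intro that[of "bv ` reps"]) auto
qed

end

section \<open>Almost sure rank of transformed partial sums\<close>

lemma det_ne_0_iff_independent_rows:
  fixes u :: "'d::finite \<Rightarrow> real^'d"
  shows "det (\<chi> r. u r) \<noteq> 0 \<longleftrightarrow> (\<forall>c. (\<Sum>r\<in>UNIV. c r *\<^sub>R u r) = 0 \<longrightarrow> (\<forall>r. c r = 0))"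
proof -
  have row: "row i (\<chi> r. u r) = u i" for i by (simp add: row_def vec_eq_iff)
  have "det (\<chi> r. u r) \<noteq> 0 \<longleftrightarrow> (\<exists>B::real^'d^'d. (\<chi> r. u r) ** B = mat 1)"
    by (simp add: invertible_det_nz[symmetric] invertible_right_inverse)
  also have "\<dots> \<longleftrightarrow> (\<forall>c. (\<Sum>i\<in>UNIV. c i *s row i (\<chi> r. u r)) = 0 \<longrightarrow> (\<forall>i. c i = 0))"
    by (rule matrix_right_invertible_independent_rows)
  finally show ?thesis by (simp add: row scalar_mult_eq_scaleR)
qed

lemma inj_on_independent_iff_det:
  fixes u :: "'i \<Rightarrow> real^'d"
  assumes b: "bij_betw b (UNIV::'d set) I"
  shows "inj_on u I \<and> independent (u ` I) \<longleftrightarrow> det (\<chi> r. u (b r)) \<noteq> 0"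
proof -
  have "inj_on u I \<longleftrightarrow> inj_on (u \<circ> b) UNIV"
    using b comp_inj_on_iff[of b UNIV u] by (simp add: bij_betw_def)
  moreover have "u ` I = range (u \<circ> b)"
    using bij_betw_imp_surj_on[OF b] by (metis image_comp)
  ultimately show ?thesis
    using independent_family_iff[of UNIV "u \<circ> b"] det_ne_0_iff_independent_rows[of "u \<circ> b"]
    by (simp add: comp_def)
qed

lemma sets_inj_on_independent:
  fixes Q :: "'x \<Rightarrow> 'i \<Rightarrow> real^'d"
  assumes fin: "finite I" and card: "card I = CARD('d)"
    and Q: "\<And>t. t \<in> I \<Longrightarrow> (\<lambda>x. Q x t) \<in> borel_measurable N"
  shows "{x \<in> space N. inj_on (Q x) I \<and> independent (Q x ` I)} \<in> sets N"
proof -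
  obtain b where b: "bij_betw b (UNIV::'d set) I"
    using finite_same_card_bij[of "UNIV::'d set" I] fin card by auto
  have "(\<lambda>v::real^'d. v $ j) \<in> borel_measurable borel" for j
    by (intro borel_measurable_continuous_onI continuous_on_component continuous_on_id)
  moreover have "b i \<in> I" for i using b by (auto simp: bij_betw_def)
  ultimately have "(\<lambda>x. Q x (b i) $ j) \<in> borel_measurable N" for i j
    using measurable_compose[OF Q] by blast
  then have "(\<lambda>x. det (\<chi> r. Q x (b r))) \<in> borel_measurable N"
    unfolding det_def by simp
  then have "{x \<in> space N. det (\<chi> r. Q x (b r)) \<noteq> 0} \<in> sets N" by measurable
  then show ?thesis using inj_on_independent_iff_det[OF b] by simp
qed

lemma dim_image_eq_min_card:
  fixes u :: "'i \<Rightarrow> real^'d"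
  assumes "finite T" "card I = CARD('d)"
    and "CARD('d) \<le> card T \<Longrightarrow> I \<subseteq> T" and "card T < CARD('d) \<Longrightarrow> T \<subseteq> I"
    and inj: "inj_on u I" and indep: "independent (u ` I)"
  shows "dim (u ` T) = min (card T) CARD('d)"
proof (cases "CARD('d) \<le> card T")
  case True
  have "CARD('d) = card (u ` I)" using inj assms(2) by (simp add: card_image)
  also have "\<dots> \<le> dim (u ` T)"
    using independent_card_le_dim[of "u ` I" "u ` T"] assms(3)[OF True] indep by blast
  finally show ?thesis using True dim_subset_UNIV_cart[of "u ` T"] by simp
next
  case False
  then have TI: "T \<subseteq> I" using assms(4) by simp
  then have "dim (u ` T) = card (u ` T)"
    using indep by (meson dim_eq_card_independent image_mono independent_mono)
  also have "\<dots> = card T" using inj TI by (meson card_image inj_on_subset)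
  finally show ?thesis using False by simp
qed

lemma exists_card_subset_comparable:
  assumes "T \<subseteq> S" "finite S" "k \<le> card S"
  obtains I where "I \<subseteq> S" "card I = k" "k \<le> card T \<Longrightarrow> I \<subseteq> T" "card T < k \<Longrightarrow> T \<subseteq> I"
proof (cases "k \<le> card T")
  case True
  then obtain I where "I \<subseteq> T" "card I = k" by (meson obtain_subset_with_card_n)
  then show ?thesis using that assms(1) True by auto
next
  case False
  have finT: "finite T" using assms finite_subset by blast
  have "k - card T \<le> card (S - T)" using assms finT by (simp add: card_Diff_subset)
  then obtain J where J: "J \<subseteq> S - T" "card J = k - card T"
    by (meson obtain_subset_with_card_n)
  have "finite J" using J(1) assms(2) by (meson Diff_subset finite_subset)
  then have "card (T \<union> J) = k"
    using False finT J by (subst card_Un_disjoint) auto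
  then show ?thesis using that[of "T \<union> J"] J assms(1) False by auto
qed

lemma AE_law_invariant_transform:
  fixes \<xi> :: "nat \<Rightarrow> 'a \<Rightarrow> real^'d" and P :: "(nat \<Rightarrow> real^'d) \<Rightarrow> bool" and n :: nat
  defines "N \<equiv> PiM {1..n} (\<lambda>_. borel :: (real^'d) measure)"
  assumes meas: "\<forall>i\<in>{1..n}. \<xi> i \<in> borel_measurable M"
    and inv: "law_invariant M n \<xi> E" and \<pi>: "\<pi> permutes {1..n}"
    and \<epsilon>: "\<epsilon> \<in> {1..n} \<rightarrow> {-1,1}" "E \<epsilon>"
    and P_sets: "{x \<in> space N. P x} \<in> sets N"
    and P_local: "\<And>x x'. (\<forall>i\<in>{1..n}. x i = x' i) \<Longrightarrow> P x = P x'"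
    and AE_P: "AE \<omega> in M. P (\<lambda>i. \<xi> i \<omega>)"
  shows "AE \<omega> in M. P (\<lambda>i. \<epsilon> i *\<^sub>R \<xi> (\<pi> i) \<omega>)"
proof -
  define X where "X \<omega> = (\<lambda>i\<in>{1..n}. \<xi> i \<omega>)" for \<omega>
  define Y where "Y \<omega> = (\<lambda>i\<in>{1..n}. \<epsilon> i *\<^sub>R \<xi> (\<pi> i) \<omega>)" for \<omega>
  have X: "X \<in> measurable M N" unfolding X_def N_def
    by (rule measurable_restrict) (use meas in auto)
  have Y: "Y \<in> measurable M N" unfolding Y_def N_def
  proof (rule measurable_restrict)
    fix i assume "i \<in> {1..n}"
    then have "\<xi> (\<pi> i) \<in> borel_measurable M" using meas permutes_in_image[OF \<pi>] by blast
    then show "(\<lambda>\<omega>. \<epsilon> i *\<^sub>R \<xi> (\<pi> i) \<omega>) \<in> borel_measurable M" by measurable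
  qed
  have X_local: "P (X \<omega>) = P (\<lambda>i. \<xi> i \<omega>)" for \<omega>
    by (rule P_local) (simp add: X_def)
  have Y_local: "P (Y \<omega>) = P (\<lambda>i. \<epsilon> i *\<^sub>R \<xi> (\<pi> i) \<omega>)" for \<omega>
    by (rule P_local) (simp add: Y_def)
  have law: "distr M N X = distr M N Y"
    using inv \<pi> \<epsilon> unfolding law_invariant_def X_def Y_def N_def by blast
  have "AE x in distr M N X. P x"
    using AE_P by (simp add: AE_distr_iff[OF X P_sets] X_local)
  then have "AE x in distr M N Y. P x" unfolding law .
  then show ?thesis by (simp add: AE_distr_iff[OF Y P_sets] Y_local)
qed

lemma AE_dim_transformed_sums:
  fixes \<xi> :: "nat \<Rightarrow> 'a \<Rightarrow> real^'d" and Q :: "(nat \<Rightarrow> real^'d) \<Rightarrow> nat \<Rightarrow> real^'d"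
  assumes meas: "\<forall>i\<in>{1..n}. \<xi> i \<in> borel_measurable M"
    and inv: "law_invariant M n \<xi> E" and \<pi>: "\<pi> permutes {1..n}"
    and \<epsilon>: "\<epsilon> \<in> {1..n} \<rightarrow> {-1,1}" "E \<epsilon>"
    and dn: "CARD('d) \<le> n" and T: "T \<subseteq> {1..n}"
    and Q_meas: "\<And>t. t \<in> {1..n} \<Longrightarrow> (\<lambda>x. Q x t) \<in> borel_measurable (PiM {1..n} (\<lambda>_. borel))"
    and Q_local: "\<And>x x' t. t \<in> {1..n} \<Longrightarrow> (\<forall>i\<in>{1..n}. x i = x' i) \<Longrightarrow> Q x t = Q x' t"
    and indep: "\<And>I. I \<subseteq> {1..n} \<Longrightarrow> card I = CARD('d) \<Longrightarrow>
       AE \<omega> in M. inj_on (Q (\<lambda>i. \<xi> i \<omega>)) I \<and> independent (Q (\<lambda>i. \<xi> i \<omega>) ` I)"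
  shows "AE \<omega> in M. dim (Q (\<lambda>p. \<epsilon> p *\<^sub>R \<xi> (\<pi> p) \<omega>) ` T) = min (card T) CARD('d)"
proof -
  obtain I where I: "I \<subseteq> {1..n}" "card I = CARD('d)"
    "CARD('d) \<le> card T \<Longrightarrow> I \<subseteq> T" "card T < CARD('d) \<Longrightarrow> T \<subseteq> I"
    using exists_card_subset_comparable[OF T _, of "CARD('d)"] dn by auto
  let ?good = "\<lambda>x. inj_on (Q x) I \<and> independent (Q x ` I)"
  have "AE \<omega> in M. ?good (\<lambda>p. \<epsilon> p *\<^sub>R \<xi> (\<pi> p) \<omega>)"
  proof (rule AE_law_invariant_transform[OF meas inv \<pi> \<epsilon>])
    show "{x \<in> space (PiM {1..n} (\<lambda>_. borel)). ?good x} \<in> sets (PiM {1..n} (\<lambda>_. borel))"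
      using sets_inj_on_independent[OF finite_subset[OF I(1)] I(2)] Q_meas I(1) by blast
    show "?good x = ?good x'" if "\<forall>i\<in>{1..n}. x i = x' i" for x x'
    proof -
      have Q_eq: "\<And>t. t \<in> I \<Longrightarrow> Q x t = Q x' t" using Q_local that I(1) by blast
      have "inj_on (Q x) I = inj_on (Q x') I" by (rule inj_on_cong) (rule Q_eq)
      moreover have "Q x ` I = Q x' ` I" by (rule image_cong[OF refl]) (rule Q_eq)
      ultimately show ?thesis by simp
    qed
  qed (use indep I in blast)
  then show ?thesis
  proof (rule eventually_mono)
    fix \<omega> assume "?good (\<lambda>p. \<epsilon> p *\<^sub>R \<xi> (\<pi> p) \<omega>)"
    then show "dim (Q (\<lambda>p. \<epsilon> p *\<^sub>R \<xi> (\<pi> p) \<omega>) ` T) = min (card T) CARD('d)"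
      using dim_image_eq_min_card[OF finite_subset[OF T] I(2-4)] by blast
  qed
qed

lemma measurable_partial_sum:
  "t \<le> n \<Longrightarrow> (\<lambda>x. partial_sum x t) \<in> borel_measurable (PiM {1..n} (\<lambda>_. borel :: (real^'d) measure))"
  unfolding partial_sum_def by (intro borel_measurable_sum measurable_component_singleton) auto

lemma measurable_partial_sum_star:
  assumes "t \<in> {1..n}"
  shows "(\<lambda>x. partial_sum_star n x t) \<in> borel_measurable (PiM {1..n} (\<lambda>_. borel :: (real^'d) measure))"
proof (cases "t = n")
  case True
  have "(\<lambda>x. x n) \<in> borel_measurable (PiM {1..n} (\<lambda>_. borel :: (real^'d) measure))"
    using assms by (intro measurable_component_singleton) auto
  with measurable_partial_sum[of "n - 1" n] show ?thesis
    unfolding partial_sum_star_def True by (auto intro: borel_measurable_diff)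
next
  case False
  then show ?thesis
    using assms measurable_partial_sum[of t n] unfolding partial_sum_star_def by simp
qed

lemma partial_sum_cong: "t \<le> n \<Longrightarrow> (\<And>i. i \<in> {1..n} \<Longrightarrow> x i = x' i) \<Longrightarrow> partial_sum x t = partial_sum x' t"
  unfolding partial_sum_def by (intro sum.cong) auto

lemma partial_sum_star_cong:
  "t \<in> {1..n} \<Longrightarrow> (\<And>i. i \<in> {1..n} \<Longrightarrow> x i = x' i) \<Longrightarrow> partial_sum_star n x t = partial_sum_star n x' t"
  unfolding partial_sum_star_def using partial_sum_cong[of t n x x'] partial_sum_cong[of "n - 1" n x x']
  by auto

lemma psum_eq_partial_sum: "psum \<xi> k \<omega> = partial_sum (\<lambda>i. \<xi> i \<omega>) k"
  unfolding psum_def partial_sum_def ..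

lemma psum_star_eq_partial_sum_star: "psum_star n \<xi> k \<omega> = partial_sum_star n (\<lambda>i. \<xi> i \<omega>) k"
  unfolding psum_star_def partial_sum_star_def psum_eq_partial_sum ..

section \<open>General position of \<open>ker A\<close>\<close>

lemma ker_A_eq: "ker_A n \<xi> \<omega> = {x \<in> Rn n. A_map n (\<lambda>i. \<xi> i \<omega>) x = 0}"
  unfolding ker_A_def A_map_def ..

lemma is_subspace_ker_A: "is_subspace (ker_A n \<xi> \<omega>)"
  unfolding is_subspace_def
proof (intro conjI ballI allI)
  show "0 \<in> ker_A n \<xi> \<omega>" unfolding ker_A_def Rn_def by simp
next
  fix x y assume "x \<in> ker_A n \<xi> \<omega>" "y \<in> ker_A n \<xi> \<omega>"
  then show "x + y \<in> ker_A n \<xi> \<omega>"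
    unfolding ker_A_def Rn_def by (simp add: scaleR_add_left sum.distrib)
next
  fix c :: real and x assume "x \<in> ker_A n \<xi> \<omega>"
  moreover have "(\<Sum>i\<in>{1..n}. (c * x i) *\<^sub>R \<xi> i \<omega>) = c *\<^sub>R (\<Sum>i\<in>{1..n}. x i *\<^sub>R \<xi> i \<omega>)"
    by (simp add: scaleR_sum_right)
  ultimately show "(\<lambda>i. c * x i) \<in> ker_A n \<xi> \<omega>"
    unfolding ker_A_def Rn_def by simp
qed

context B_flat
begin

lemma dim_Int_kernel_A_map:
  fixes z :: "nat \<Rightarrow> real^'d"
  assumes V: "finite V" "span V = L"
    and dim_image: "dim (A_map n z ` V) = min (dim L) CARD('d)"
  shows "dim {x \<in> L. A_map n z x = 0} = dim L - CARD('d)"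
proof -
  have "A_map n z ` L = span (A_map n z ` V)"
    using V(2) linear_A_map by (metis span_linear_image)
  then have "dim (A_map n z ` L) = min (dim L) CARD('d)" using dim_image by simp
  moreover have "dim L = dim {x \<in> L. A_map n z x = 0} + dim (A_map n z ` L)"
    using V span_superset by (intro dim_eq_dim_kernel_add_dim_image[OF linear_A_map subspace_flat V(1)]) auto
  ultimately show ?thesis by linarith
qed

lemma AE_dim_Int_ker_A:
  fixes M :: "'a measure" and \<xi> :: "nat \<Rightarrow> 'a \<Rightarrow> real^'d" and even_signs :: bool
  assumes meas: "\<forall>i\<in>{1..n}. \<xi> i \<in> borel_measurable M" and dn: "CARD('d) \<le> n"
    and inv: "law_invariant M n \<xi> E"
    and E: "\<And>\<epsilon>. (even_signs \<Longrightarrow> (\<Prod>i\<in>{1..n}. \<epsilon> i) = 1) \<Longrightarrow> E \<epsilon>"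
    and indep: "any_d_indep M n (psum \<xi>)"
    and indep_star: "even_signs \<Longrightarrow> any_d_indep M n (psum_star n \<xi>)"
  shows "AE \<omega> in M. dim (L \<inter> ker_A n \<xi> \<omega>) = dim L - CARD('d)"
proof -
  have n: "1 \<le> n" using dn by (metis One_nat_def Suc_leI le_trans zero_less_card_finite)
  obtain V T \<pi> \<epsilon> star where V: "finite V" "span V = L" and T: "card T = dim L" "T \<subseteq> {1..n}"
    and \<pi>: "\<pi> permutes {1..n}" and \<epsilon>: "\<epsilon> \<in> {1..n} \<rightarrow> {-1,1}"
    and star: "star \<Longrightarrow> even_signs" and prod: "even_signs \<Longrightarrow> (\<Prod>i\<in>{1..n}. \<epsilon> i) = 1"
    and span: "\<And>z::nat \<Rightarrow> real^'d. span (A_map n z ` V) =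
        span ((if star then partial_sum_star n else partial_sum) (\<lambda>p. \<epsilon> p *\<^sub>R z (\<pi> p)) ` T)"
    by (rule flat_image_spanned_by_partial_sums[OF n, where even_signs = even_signs]) blast
  define Q :: "(nat \<Rightarrow> real^'d) \<Rightarrow> nat \<Rightarrow> real^'d"
    where "Q = (if star then partial_sum_star n else partial_sum)"
  have "AE \<omega> in M. dim (Q (\<lambda>p. \<epsilon> p *\<^sub>R \<xi> (\<pi> p) \<omega>) ` T) = min (card T) CARD('d)"
  proof (rule AE_dim_transformed_sums[OF meas inv \<pi> \<epsilon> E[OF prod] dn T(2)])
    show "(\<lambda>x. Q x t) \<in> borel_measurable (PiM {1..n} (\<lambda>_. borel))" if "t \<in> {1..n}" for t
      using that measurable_partial_sum measurable_partial_sum_star unfolding Q_def by auto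
    show "Q x t = Q x' t" if "t \<in> {1..n}" "\<forall>i\<in>{1..n}. x i = x' i" for x x' t
      using partial_sum_cong[of t n x x'] partial_sum_star_cong[of t n x x'] that unfolding Q_def by auto
    have "Q (\<lambda>i. \<xi> i \<omega>) = (if star then (\<lambda>k. psum_star n \<xi> k \<omega>) else (\<lambda>k. psum \<xi> k \<omega>))" for \<omega>
      unfolding Q_def psum_eq_partial_sum psum_star_eq_partial_sum_star by auto
    then show "AE \<omega> in M. inj_on (Q (\<lambda>i. \<xi> i \<omega>)) I \<and> independent (Q (\<lambda>i. \<xi> i \<omega>) ` I)"
      if "I \<subseteq> {1..n}" "card I = CARD('d)" for I
      using that indep indep_star[OF star] unfolding any_d_indep_def by (cases star) auto
  qed
  then show ?thesis
  proof (rule eventually_mono)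
    fix \<omega> assume "dim (Q (\<lambda>p. \<epsilon> p *\<^sub>R \<xi> (\<pi> p) \<omega>) ` T) = min (card T) CARD('d)"
    then have "dim (A_map n (\<lambda>i. \<xi> i \<omega>) ` V) = min (dim L) CARD('d)"
      using span[of "\<lambda>i. \<xi> i \<omega>"] T(1) unfolding Q_def by (metis dim_span)
    then have "dim {x \<in> L. A_map n (\<lambda>i. \<xi> i \<omega>) x = 0} = dim L - CARD('d)"
      by (rule dim_Int_kernel_A_map[OF V])
    moreover have "L \<inter> ker_A n \<xi> \<omega> = {x \<in> L. A_map n (\<lambda>i. \<xi> i \<omega>) x = 0}"
      using flat_subset_Rn unfolding ker_A_eq by blast
    ultimately show "dim (L \<inter> ker_A n \<xi> \<omega>) = dim L - CARD('d)" by simp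
  qed
qed

end

lemma general_position_if_dim_Int:
  assumes K: "K \<subseteq> Rn n" "is_subspace K" and dn: "d \<le> n" and dim_K: "dim K = n - d"
    and dim_Int: "\<And>B. B \<subseteq> Arr \<Longrightarrow> B \<noteq> {} \<Longrightarrow> dim (\<Inter>B \<inter> K) = dim (\<Inter>B) - d"
    and dim_le: "\<And>B. B \<subseteq> Arr \<Longrightarrow> B \<noteq> {} \<Longrightarrow> dim (\<Inter>B) \<le> n"
  shows "n - vdim K = d \<and> general_position n Arr K"
proof -
  have codim: "n - vdim K = d" using dim_K dn by (simp add: vdim_eq_dim)
  have "vdim (\<Inter>H\<in>B. H \<inter> K) = (if arr_rank n B \<le> n - d then n - d - arr_rank n B else 0)"
    if "B \<subseteq> Arr" "B \<noteq> {}" for B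
  proof -
    have "(\<Inter>H\<in>B. H \<inter> K) = \<Inter>B \<inter> K" using that(2) by blast
    then show ?thesis
      using dim_Int[OF that] dim_le[OF that] dn unfolding arr_rank_def vdim_eq_dim by auto
  qed
  then show ?thesis using K codim unfolding general_position_def Let_def by auto
qed

lemma AE_general_position_ker_A:
  fixes M :: "'a measure" and \<xi> :: "nat \<Rightarrow> 'a \<Rightarrow> real^'d" and even_signs :: bool
  assumes meas: "\<forall>i\<in>{1..n}. \<xi> i \<in> borel_measurable M" and dn: "CARD('d) \<le> n"
    and inv: "law_invariant M n \<xi> E"
    and E: "\<And>\<epsilon>. (even_signs \<Longrightarrow> (\<Prod>i\<in>{1..n}. \<epsilon> i) = 1) \<Longrightarrow> E \<epsilon>"
    and indep: "any_d_indep M n (psum \<xi>)"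
    and indep_star: "even_signs \<Longrightarrow> any_d_indep M n (psum_star n \<xi>)"
    and Arr: "Arr \<subseteq> arr_B n"
  shows "AE \<omega> in M. n - vdim (ker_A n \<xi> \<omega>) = CARD('d) \<and> general_position n Arr (ker_A n \<xi> \<omega>)"
proof -
  let ?Bs = "{B. B \<subseteq> Arr \<and> B \<noteq> {}}"
  have flat: "B_flat n (\<Inter>B)" if "B \<in> ?Bs" for B
    using that Arr B_hyperplane_if_in_arr_B by (intro B_flat_Inter_hyperplanes) auto
  have "finite (Pow Arr)" using finite_subset[OF Arr finite_arr_B] by simp
  then have "finite ?Bs" by (rule finite_subset[rotated]) blast
  then have "AE \<omega> in M. \<forall>B\<in>?Bs. dim (\<Inter>B \<inter> ker_A n \<xi> \<omega>) = dim (\<Inter>B) - CARD('d)"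
    using B_flat.AE_dim_Int_ker_A[OF flat meas dn inv E indep indep_star] by (rule AE_finite_allI)
  moreover have "AE \<omega> in M. dim (Rn n \<inter> ker_A n \<xi> \<omega>) = dim (Rn n) - CARD('d)"
    by (rule B_flat.AE_dim_Int_ker_A[OF B_flat_Rn meas dn inv E indep indep_star])
  ultimately show ?thesis
  proof (rule eventually_elim2)
    fix \<omega>
    assume dim_Int: "\<forall>B\<in>?Bs. dim (\<Inter>B \<inter> ker_A n \<xi> \<omega>) = dim (\<Inter>B) - CARD('d)"
      and dim_Rn_Int: "dim (Rn n \<inter> ker_A n \<xi> \<omega>) = dim (Rn n) - CARD('d)"
    have sub: "ker_A n \<xi> \<omega> \<subseteq> Rn n" unfolding ker_A_def by blast
    then have dim_K: "dim (ker_A n \<xi> \<omega>) = n - CARD('d)"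
      using dim_Rn_Int dim_Rn by (simp add: Int_absorb1)
    show "n - vdim (ker_A n \<xi> \<omega>) = CARD('d) \<and> general_position n Arr (ker_A n \<xi> \<omega>)"
    proof (rule general_position_if_dim_Int[OF sub is_subspace_ker_A dn dim_K])
      show "dim (\<Inter>B \<inter> ker_A n \<xi> \<omega>) = dim (\<Inter>B) - CARD('d)" if "B \<subseteq> Arr" "B \<noteq> {}" for B
        using dim_Int that by blast
      show "dim (\<Inter>B) \<le> n" if "B \<subseteq> Arr" "B \<noteq> {}" for B
        using B_flat.dim_flat_le[OF flat] that by blast
    qed
  qed
qed

theorem lemma6p3:
  fixes M :: "'a measure" and \<xi> :: "nat \<Rightarrow> 'a \<Rightarrow> real^'d" and n :: nat
  assumes "prob_space M"
    and "\<forall>i\<in>{1..n}. \<xi> i \<in> borel_measurable M"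
  shows
    "(n \<ge> CARD('d) \<and> law_invariant M n \<xi> (\<lambda>_. True) \<and> any_d_indep M n (psum \<xi>)
       \<longrightarrow> (AE \<omega> in M. n - vdim (ker_A n \<xi> \<omega>) = CARD('d)
                        \<and> general_position n (arr_B n) (ker_A n \<xi> \<omega>)))
   \<and> (n \<ge> max 2 CARD('d) \<and> law_invariant M n \<xi> (\<lambda>\<epsilon>. (\<Prod>i\<in>{1..n}. \<epsilon> i) = 1)
       \<and> any_d_indep M n (psum \<xi>) \<and> any_d_indep M n (psum_star n \<xi>)
       \<longrightarrow> (AE \<omega> in M. n - vdim (ker_A n \<xi> \<omega>) = CARD('d)
                        \<and> general_position n (arr_D n) (ker_A n \<xi> \<omega>)))"
proof (intro conjI impI)
  assume "n \<ge> CARD('d) \<and> law_invariant M n \<xi> (\<lambda>_. True) \<and> any_d_indep M n (psum \<xi>)"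
  then show "AE \<omega> in M. n - vdim (ker_A n \<xi> \<omega>) = CARD('d) \<and> general_position n (arr_B n) (ker_A n \<xi> \<omega>)"
    by (intro AE_general_position_ker_A[OF assms(2), where even_signs = False and E = "\<lambda>_. True"]) auto
next
  assume "n \<ge> max 2 CARD('d) \<and> law_invariant M n \<xi> (\<lambda>\<epsilon>. (\<Prod>i\<in>{1..n}. \<epsilon> i) = 1)
       \<and> any_d_indep M n (psum \<xi>) \<and> any_d_indep M n (psum_star n \<xi>)"
  then show "AE \<omega> in M. n - vdim (ker_A n \<xi> \<omega>) = CARD('d) \<and> general_position n (arr_D n) (ker_A n \<xi> \<omega>)"
    by (intro AE_general_position_ker_A[OF assms(2), where even_signs = True and E = "\<lambda>\<epsilon>. (\<Prod>i\<in>{1..n}. \<epsilon> i) = 1"] arr_D_subset_arr_B) auto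
qed

end
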